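(* Let $\varpi(x,y)$ and $\varrho(x,y)$ be $2$-homogeneous rational functions with $x\varrho(x,y)-y\varpi(x,y)\neq 0$ (not identically zero). Suppose a pair of functions $(u,v)=(u(x,y),v(x,y))$ satisfies the system of partial differential equations $$u_{x}(\varpi-x)+u_{y}(\varrho-y)=-u,\qquad v_{x}(\varpi-x)+v_{y}(\varrho-y)=-v,$$ together with the boundary conditions $$\lim_{z\to 0}\frac{u(xz,yz)}{z}=x,\qquad \lim_{z\to 0}\frac{v(xz,yz)}{z}=y.$$ Let $f$ be a solution of the ordinary differential equation $$f(x)\varrho(x,1)+f'(x)\big(x\varrho(x,1)-\varpi(x,1)\big)=1,$$ and let $\mathscr{W}(x,y)$ be a $1$-homogeneous solution of $$\mathscr{W}(x,y)\varrho(x,y)+\mathscr{W}_{x}(x,y)\big[y\varpi(x,y)-x\varrho(x,y)\big]=0.$$ Then $$\mathscr{W}(u,v)=\mathscr{W}(x,y),\qquad \frac{1}{v}f\Big(\frac{u}{v}\Big)=\frac{1}{y}f\Big(\frac{x}{y}\Big)-1.$$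
   Context: The functions $f$ and $\mathscr{W}$ may be multivalued (e.g. algebraic or transcendental). In that case the second identity is to be understood as follows: with $u^{z}(x,y)=z^{-1}u(xz,yz)$ and $v^{z}(x,y)=z^{-1}v(xz,yz)$, one has $\frac{1}{v^{z}}f\big(\frac{u^{z}}{v^{z}}\big)=\frac{1}{y}f\big(\frac{x}{y}\big)-z$ and $\mathscr{W}(u^z,v^z)=\mathscr{W}(x,y)$ for $z$ small enough, with branches chosen continuously from $z=0$ (where $(u^z,v^z)=(x,y)$). *)

theory Defs
  imports "HOL-Analysis.Analysis" "HOL-Computational_Algebra.Polynomial"
begin

text \<open>Bivariate real polynomials are represented as \<open>real poly poly\<close>:
  the outer variable is y, the coefficients are polynomials in x.\<close>
definition poly2 :: "real poly poly \<Rightarrow> real \<Rightarrow> real \<Rightarrow> real" where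
  "poly2 P x y = poly (poly P [:y:]) x"

definition rat2 :: "real poly poly \<Rightarrow> real poly poly \<Rightarrow> real \<Rightarrow> real \<Rightarrow> real" where
  "rat2 P Q x y = poly2 P x y / poly2 Q x y"

text \<open>P/Q is a k-homogeneous rational function: P(tx,ty)/Q(tx,ty) = t^k P(x,y)/Q(x,y)
  as an identity of rational functions, i.e. after clearing denominators.\<close>
definition homogeneous_rat2 :: "nat \<Rightarrow> real poly poly \<Rightarrow> real poly poly \<Rightarrow> bool" where
  "homogeneous_rat2 k P Q \<longleftrightarrow> Q \<noteq> 0 \<and>
     (\<forall>t x y. poly2 P (t*x) (t*y) * poly2 Q x y = t^k * poly2 P x y * poly2 Q (t*x) (t*y))"

end

theory Submission
  imports Defs
begin

text \<open>Points are written as \<open>s \<cdot> (t \<cdot> y t, y t)\<close>, where \<open>t \<mapsto> (t \<cdot> y t, y t)\<close> is the trajectory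
  of the homogeneous field \<open>(\<varpi>, \<varrho>)\<close> through \<open>(x0, y0)\<close>, parametrised by the slope \<open>t = x / y\<close>;
  this requires \<open>D t = t \<varrho>(t,1) - \<varpi>(t,1) \<noteq> 0\<close>. By Euler's relation the equation for \<open>W\<close> says
  that \<open>W\<close> is annihilated by \<open>(\<varpi>, \<varrho>)\<close>, so \<open>W\<close> is constant along the trajectory. In the
  coordinates \<open>(s, t)\<close> the characteristic field \<open>(\<varpi> - x, \<varrho> - y)\<close> of the equations for \<open>u\<close>
  and \<open>v\<close> reads \<open>s' = -s\<close>, \<open>t' = -s \<cdot> y t \<cdot> D t\<close>. Hence \<open>u / s\<close>, \<open>v / s\<close> and \<open>s - R t\<close> are
  constant along characteristics, where \<open>R = f / y\<close> is a primitive of \<open>1 / (y \<cdot> D)\<close> by the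
  equation for \<open>f\<close>. The characteristic through \<open>z \<cdot> (x0, y0)\<close> reaches the boundary \<open>s \<rightarrow> 0\<close>
  at the slope \<open>ts\<close> with \<open>R ts = R t0 - z\<close>, where the boundary conditions give \<open>u / z = ts \<cdot> y ts\<close>
  and \<open>v / z = y ts\<close>; both identities follow. If \<open>D t0 = 0\<close>, the ray through \<open>(x0, y0)\<close> is
  itself invariant, and the same computation along it gives \<open>u / z = x0 / (1 - z \<cdot> y0 \<cdot> \<varrho>(t0,1))\<close>.\<close>

lemma has_real_derivative_compose_bivariate:
  fixes \<phi> :: "real \<Rightarrow> real \<Rightarrow> real"
  assumes d\<phi>: "((\<lambda>(a,b). \<phi> a b) has_derivative (\<lambda>(h,k). \<phi>x * h + \<phi>y * k)) (at (p t, q t))"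
    and dp: "(p has_real_derivative p') (at t)" and dq: "(q has_real_derivative q') (at t)"
  shows "((\<lambda>t. \<phi> (p t) (q t)) has_real_derivative \<phi>x * p' + \<phi>y * q') (at t)"
proof -
  have "((\<lambda>t. (p t, q t)) has_derivative (\<lambda>h. (p' * h, q' * h))) (at t)"
    using has_derivative_Pair[OF dp[unfolded has_field_derivative_def] dq[unfolded has_field_derivative_def]]
    by (simp add: mult.commute)
  from diff_chain_at[OF this d\<phi>]
  have "((\<lambda>t. \<phi> (p t) (q t)) has_derivative (\<lambda>h. \<phi>x * (p' * h) + \<phi>y * (q' * h))) (at t)"
    by (simp add: o_def)
  moreover have "(\<lambda>h. \<phi>x * (p' * h) + \<phi>y * (q' * h)) = (*) (\<phi>x * p' + \<phi>y * q')"
    by (auto simp: fun_eq_iff algebra_simps)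
  ultimately show ?thesis
    unfolding has_field_derivative_def by simp
qed

text \<open>If \<open>(p, q)\<close> moves along the field \<open>V\<close> with speed \<open>\<nu> / g\<close> and \<open>V\<close> scales \<open>\<phi>\<close> by the
  rate \<open>\<kappa>\<close>, then \<open>\<phi> \<cdot> g\<close> is a first integral.\<close>
lemma DERIV_first_integral_along_field:
  fixes \<phi> :: "real \<Rightarrow> real \<Rightarrow> real"
  assumes d\<phi>: "((\<lambda>(a,b). \<phi> a b) has_derivative (\<lambda>(h,k). \<phi>x * h + \<phi>y * k)) (at (p t, q t))"
    and dp: "(p has_real_derivative p') (at t)" and dq: "(q has_real_derivative q') (at t)"
    and dg: "(g has_real_derivative - \<kappa> * \<nu>) (at t)"
    and tangent: "g t * p' = \<nu> * Vp" "g t * q' = \<nu> * Vq"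
    and pde: "\<phi>x * Vp + \<phi>y * Vq = \<kappa> * \<phi> (p t) (q t)"
  shows "((\<lambda>t. \<phi> (p t) (q t) * g t) has_real_derivative 0) (at t)"
proof -
  have "(\<phi>x * p' + \<phi>y * q') * g t = \<phi>x * (g t * p') + \<phi>y * (g t * q')"
    by (simp add: algebra_simps)
  also have "\<dots> = \<nu> * (\<phi>x * Vp + \<phi>y * Vq)"
    unfolding tangent by (simp add: algebra_simps)
  finally have "(\<phi>x * p' + \<phi>y * q') * g t + \<phi> (p t) (q t) * (- \<kappa> * \<nu>) = 0"
    by (simp add: pde)
  with DERIV_mult[OF has_real_derivative_compose_bivariate[OF d\<phi> dp dq] dg] show ?thesis
    by simp
qed

lemma DERIV_zero_closed_segment_eq:
  fixes k :: "real \<Rightarrow> real"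
  assumes "\<And>t. t \<in> closed_segment a b \<Longrightarrow> (k has_real_derivative 0) (at t)"
  shows "k a = k b"
  using has_field_derivative_zero_constant[of "closed_segment a b" k] assms
  by (metis convex_closed_segment ends_in_segment has_field_derivative_at_within)

lemma tendsto_at_right_scaled:
  fixes g :: "real \<Rightarrow> real"
  assumes "(g \<longlongrightarrow> c) (at 0)" and "z \<noteq> 0"
  shows "((\<lambda>\<theta>. g (z * \<theta>)) \<longlongrightarrow> c) (at_right 0)"
proof -
  have "filterlim (\<lambda>\<theta>. z * \<theta>) (at 0) (at_right 0)"
    unfolding filterlim_at using \<open>z \<noteq> 0\<close>
    by (auto simp: eventually_at_filter intro!: tendsto_eq_intros)
  then show ?thesis using filterlim_compose[OF assms(1)] by blast
qed

lemma continuous_value_eq_limit_of_shift: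
  fixes G H :: "real \<Rightarrow> real"
  assumes H: "(H \<longlongrightarrow> c) (at 0)" and G: "isCont G z" and z: "z \<noteq> 0"
    and eq: "\<And>\<theta>. 0 < \<theta> \<Longrightarrow> \<theta> < 1 \<Longrightarrow> H (z * \<theta>) = G (z + z * \<theta>)"
  shows "G z = c"
proof -
  have "((\<lambda>\<theta>. z + z * \<theta>) \<longlongrightarrow> z) (at_right 0)"
    by (auto intro!: tendsto_eq_intros)
  then have "((\<lambda>\<theta>. G (z + z * \<theta>)) \<longlongrightarrow> G z) (at_right 0)"
    by (rule isCont_tendsto_compose[OF G])
  moreover have "((\<lambda>\<theta>. G (z + z * \<theta>)) \<longlongrightarrow> c) (at_right 0)"
    using tendsto_at_right_scaled[OF H z]
    by (rule tendsto_cong[THEN iffD1, rotated]) (rule eventually_at_rightI[of 0 1], auto simp: eq)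
  ultimately show ?thesis
    using tendsto_unique[of "at_right (0::real)"] by force
qed

lemma euler_relation_degree_one:
  fixes W :: "real \<Rightarrow> real \<Rightarrow> real"
  assumes N: "open N" "(x, y) \<in> N"
    and hom: "\<And>\<tau>. \<tau> > 0 \<Longrightarrow> (\<tau> * x, \<tau> * y) \<in> N \<Longrightarrow> W (\<tau> * x) (\<tau> * y) = \<tau> * W x y"
    and dW: "((\<lambda>(a,b). W a b) has_derivative (\<lambda>(h,k). Wx * h + Wy * k)) (at (x, y))"
  shows "x * Wx + y * Wy = W x y"
proof -
  define S where "S = {0<..} \<inter> (\<lambda>\<tau>::real. (\<tau> * x, \<tau> * y)) -` N"
  have S: "open S" "1 \<in> S"
    using N unfolding S_def
    by (auto intro!: open_Int continuous_open_vimage continuous_intros)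
  have "((\<lambda>\<tau>. W (\<tau> * x) (\<tau> * y)) has_real_derivative Wx * x + Wy * y) (at 1)"
    by (rule has_real_derivative_compose_bivariate[where p="\<lambda>\<tau>. \<tau> * x" and q="\<lambda>\<tau>. \<tau> * y"])
      (use dW in \<open>auto intro!: derivative_eq_intros\<close>)
  moreover have "((\<lambda>\<tau>. W (\<tau> * x) (\<tau> * y)) has_real_derivative W x y) (at 1)"
  proof (rule has_field_derivative_transform_within_open[OF _ S])
    show "((\<lambda>\<tau>. \<tau> * W x y) has_real_derivative W x y) (at 1)"
      by (auto intro!: derivative_eq_intros)
  qed (auto simp: S_def hom)
  ultimately show ?thesis
    using DERIV_unique by (fastforce simp: mult.commute)
qed

lemma linear_ode_local_solution:
  fixes c :: "real \<Rightarrow> real"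
  assumes "e > 0" and c: "continuous_on {t0 - e..t0 + e} c" and "y0 \<noteq> 0"
  obtains y where "y t0 = y0" "\<And>t. y t * y0 > 0"
    "\<And>t. \<bar>t - t0\<bar> < e \<Longrightarrow> (y has_real_derivative y t * c t) (at t)"
proof -
  define H where "H t = integral {t0 - e..t} c" for t
  have dH: "(H has_real_derivative c t) (at t)" if "\<bar>t - t0\<bar> < e" for t
  proof -
    have "(H has_real_derivative c t) (at t within {t0 - e..t0 + e})"
      unfolding H_def using that by (intro integral_has_real_derivative c) auto
    moreover have "at t within {t0 - e..t0 + e} = at t"
      using that by (intro at_within_Icc_at) auto
    ultimately show ?thesis by simp
  qed
  define y where "y = (\<lambda>t. y0 * exp (H t - H t0))"
  show thesis
  proof (rule that[of y])
    show "y t0 = y0" by (simp add: y_def)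
    show "y t * y0 > 0" for t
    proof -
      have "y t * y0 = exp (H t - H t0) * y0\<^sup>2" by (simp add: y_def power2_eq_square)
      then show ?thesis using \<open>y0 \<noteq> 0\<close> by simp
    qed
    show "(y has_real_derivative y t * c t) (at t)" if "\<bar>t - t0\<bar> < e" for t
      using DERIV_cmult[OF DERIV_fun_exp[OF DERIV_diff[OF dH[OF that] DERIV_const[of "H t0"]]], of y0]
      by (simp add: y_def mult_ac)
  qed
qed

lemma DERIV_sign_imp_closed_segment:
  fixes R :: "real \<Rightarrow> real"
  assumes dR: "\<And>t. t \<in> closed_segment a b \<Longrightarrow> (R has_real_derivative R' t) (at t) \<and> 0 < \<sigma> * R' t"
    and t: "t \<in> closed_segment a b"
  shows "R t \<in> closed_segment (R a) (R b)"
proof -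
  have seg: "closed_segment a b = {min a b..max a b}"
    by (auto simp: closed_segment_eq_real_ivl)
  have mono: "\<sigma> * R s \<le> \<sigma> * R s'"
    if "s \<in> closed_segment a b" "s' \<in> closed_segment a b" "s \<le> s'" for s s'
  proof (rule DERIV_nonneg_imp_nondecreasing[OF \<open>s \<le> s'\<close>])
    fix x assume "s \<le> x" "x \<le> s'"
    then have "x \<in> closed_segment a b" using that by (auto simp: seg)
    then show "\<exists>D. ((\<lambda>x. \<sigma> * R x) has_real_derivative D) (at x) \<and> D \<ge> 0"
      using dR by (blast intro: DERIV_cmult less_imp_le)
  qed
  have "\<sigma> * R t \<in> closed_segment (\<sigma> * R a) (\<sigma> * R b)"
    using mono[OF _ t, of a] mono[OF t, of b] mono[OF _ t, of b] mono[OF t, of a] t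
    by (cases "a \<le> b") (auto simp: seg closed_segment_eq_real_ivl)
  moreover have "\<sigma> \<noteq> 0" using dR[of a] by auto
  ultimately show ?thesis
    by (cases "\<sigma> > 0") (auto simp: closed_segment_eq_real_ivl mult_le_cancel_left split: if_splits)
qed

lemma eventually_attains_shifted_value:
  fixes R :: "real \<Rightarrow> real"
  assumes "e > 0"
    and dR: "\<And>t. \<bar>t - t0\<bar> \<le> e \<Longrightarrow> (R has_real_derivative R' t) (at t) \<and> 0 < \<sigma> * R' t"
  shows "\<forall>\<^sub>F z in at 0. \<exists>ts. \<bar>ts - t0\<bar> \<le> e \<and> R ts = R t0 - z"
proof -
  define g where "g = (\<lambda>t. \<sigma> * R t)"
  have dg: "\<exists>D. (g has_real_derivative D) (at t) \<and> 0 < D" if "t0 - e \<le> t" "t \<le> t0 + e" for t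
  proof -
    have "\<bar>t - t0\<bar> \<le> e" using that by arith
    then show ?thesis unfolding g_def using dR by (blast intro: DERIV_cmult)
  qed
  then have cont: "continuous_on {t0 - e..t0 + e} g"
    by (intro continuous_at_imp_continuous_on ballI) (metis DERIV_isCont atLeastAtMost_iff)
  have inc: "g s < g s'" if "t0 - e \<le> s" "s < s'" "s' \<le> t0 + e" for s s'
    by (rule DERIV_pos_imp_increasing[OF \<open>s < s'\<close>]) (use that in \<open>auto intro: dg\<close>)
  have lo: "g (t0 - e) < g t0" and hi: "g t0 < g (t0 + e)"
    using \<open>e > 0\<close> by (auto intro: inc)
  have lim: "((\<lambda>z. g t0 - \<sigma> * z) \<longlongrightarrow> g t0) (at 0)"
    by (auto intro!: tendsto_eq_intros)
  have "\<forall>\<^sub>F z in at 0. g (t0 - e) < g t0 - \<sigma> * z \<and> g t0 - \<sigma> * z < g (t0 + e)"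
    using order_tendstoD(1)[OF lim lo] order_tendstoD(2)[OF lim hi] by (rule eventually_conj)
  then show ?thesis
  proof (rule eventually_mono)
    fix z assume "g (t0 - e) < g t0 - \<sigma> * z \<and> g t0 - \<sigma> * z < g (t0 + e)"
    then have "g (t0 - e) \<le> g t0 - \<sigma> * z" "g t0 - \<sigma> * z \<le> g (t0 + e)" by auto
    moreover have "t0 - e \<le> t0 + e" using \<open>e > 0\<close> by simp
    ultimately obtain ts where ts: "t0 - e \<le> ts" "ts \<le> t0 + e" "g ts = g t0 - \<sigma> * z"
      using IVT'[OF _ _ _ cont] by blast
    have "\<sigma> * (R ts - (R t0 - z)) = 0" using ts(3) by (simp add: g_def algebra_simps)
    moreover have "\<bar>ts - t0\<bar> \<le> e" using ts(1,2) by arith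
    moreover have "\<sigma> \<noteq> 0" using dR[of t0] \<open>e > 0\<close> by auto
    ultimately show "\<exists>ts. \<bar>ts - t0\<bar> \<le> e \<and> R ts = R t0 - z" by auto
  qed
qed

lemma homogeneous_rat2_scale:
  assumes "homogeneous_rat2 k P Q" and "poly2 Q x y \<noteq> 0" and "poly2 Q (s * x) (s * y) \<noteq> 0"
  shows "rat2 P Q (s * x) (s * y) = s ^ k * rat2 P Q x y"
proof -
  have "poly2 P (s * x) (s * y) * poly2 Q x y = s ^ k * poly2 P x y * poly2 Q (s * x) (s * y)"
    using assms(1) unfolding homogeneous_rat2_def by blast
  with assms(2,3) show ?thesis
    unfolding rat2_def by (simp add: field_simps)
qed

lemma isCont_rat2_line: "poly2 Q t 1 \<noteq> 0 \<Longrightarrow> isCont (\<lambda>t. rat2 P Q t 1) t"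
  unfolding rat2_def poly2_def by (intro isCont_divide poly_isCont)

lemma closed_segment_scaled_bounds:
  fixes z w :: real
  assumes "w \<in> closed_segment (z * a) (z * b)" and "0 < a" "a \<le> b" "z \<noteq> 0"
  shows "w \<noteq> 0" and "\<bar>w\<bar> \<le> \<bar>z\<bar> * b"
proof -
  have "w \<noteq> 0 \<and> \<bar>w\<bar> \<le> \<bar>z\<bar> * b"
  proof (cases "z > 0")
    case True
    then have "z * a \<le> z * b" "0 < z * a" using assms(2,3) by (auto intro: mult_left_mono)
    with assms(1) have "0 < w" "w \<le> z * b" by (auto simp: closed_segment_eq_real_ivl split: if_split_asm)
    then show ?thesis using True by auto
  next
    case False
    with assms(4) have z: "z < 0" by simp
    then have "z * b \<le> z * a" "z * a < 0"
      using assms(2,3) by (auto intro: mult_left_mono_neg simp: mult_neg_pos)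
    with assms(1) have "w < 0" "z * b \<le> w" by (auto simp: closed_segment_eq_real_ivl split: if_split_asm)
    then show ?thesis using z by auto
  qed
  then show "w \<noteq> 0" and "\<bar>w\<bar> \<le> \<bar>z\<bar> * b" by auto
qed

lemma eventually_at_zero_abs_less:
  fixes r :: real
  assumes "r > 0"
  shows "\<forall>\<^sub>F z in at 0. z \<noteq> 0 \<and> \<bar>z\<bar> < r"
  unfolding eventually_at using assms by (intro exI[of _ r]) auto

locale homogeneous_characteristics =
  fixes Pw Qw Pr Qr :: "real poly poly"
    and u v ux uy vx vy W Wx Wy :: "real \<Rightarrow> real \<Rightarrow> real"
    and f f' :: "real \<Rightarrow> real"
    and x0 y0 \<delta> :: real
    and U N :: "(real \<times> real) set" and J :: "real set"
  assumes hom_w: "homogeneous_rat2 2 Pw Qw"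
    and hom_r: "homogeneous_rat2 2 Pr Qr"
    and U_open: "open U" and x0y0_U: "(x0, y0) \<in> U" and delta_pos: "\<delta> > 0"
    and uv_dom: "\<forall>(x,y)\<in>U. \<forall>s. s \<noteq> 0 \<and> \<bar>s\<bar> < \<delta> \<longrightarrow>
                   poly2 Qw (s*x) (s*y) \<noteq> 0 \<and> poly2 Qr (s*x) (s*y) \<noteq> 0"
    and u_diff: "\<forall>(x,y)\<in>U. \<forall>s. s \<noteq> 0 \<and> \<bar>s\<bar> < \<delta> \<longrightarrow>
                   ((\<lambda>(a,b). u a b) has_derivative
                      (\<lambda>(h,k). ux (s*x) (s*y) * h + uy (s*x) (s*y) * k)) (at (s*x, s*y))"
    and v_diff: "\<forall>(x,y)\<in>U. \<forall>s. s \<noteq> 0 \<and> \<bar>s\<bar> < \<delta> \<longrightarrow>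
                   ((\<lambda>(a,b). v a b) has_derivative
                      (\<lambda>(h,k). vx (s*x) (s*y) * h + vy (s*x) (s*y) * k)) (at (s*x, s*y))"
    and u_pde: "\<forall>(x,y)\<in>U. \<forall>s. s \<noteq> 0 \<and> \<bar>s\<bar> < \<delta> \<longrightarrow>
                   ux (s*x) (s*y) * (rat2 Pw Qw (s*x) (s*y) - s*x)
                 + uy (s*x) (s*y) * (rat2 Pr Qr (s*x) (s*y) - s*y) = - u (s*x) (s*y)"
    and v_pde: "\<forall>(x,y)\<in>U. \<forall>s. s \<noteq> 0 \<and> \<bar>s\<bar> < \<delta> \<longrightarrow>
                   vx (s*x) (s*y) * (rat2 Pw Qw (s*x) (s*y) - s*x)
                 + vy (s*x) (s*y) * (rat2 Pr Qr (s*x) (s*y) - s*y) = - v (s*x) (s*y)"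
    and u_bd: "\<forall>(x,y)\<in>U. ((\<lambda>z. u (x*z) (y*z) / z) \<longlongrightarrow> x) (at 0)"
    and v_bd: "\<forall>(x,y)\<in>U. ((\<lambda>z. v (x*z) (y*z) / z) \<longlongrightarrow> y) (at 0)"
    and y0_nz: "y0 \<noteq> 0"
    and J_open: "open J" and J_pt: "x0 / y0 \<in> J"
    and f_ode: "\<forall>t\<in>J. poly2 Qw t 1 \<noteq> 0 \<and> poly2 Qr t 1 \<noteq> 0 \<and>
                   (f has_real_derivative f' t) (at t) \<and>
                   f t * rat2 Pr Qr t 1 + f' t * (t * rat2 Pr Qr t 1 - rat2 Pw Qw t 1) = 1"
    and N_open: "open N" and x0y0_N: "(x0, y0) \<in> N"
    and N_dom: "\<forall>(x,y)\<in>N. poly2 Qw x y \<noteq> 0 \<and> poly2 Qr x y \<noteq> 0"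
    and W_hom: "\<forall>(x,y)\<in>N. \<forall>t>0. (t*x, t*y) \<in> N \<longrightarrow> W (t*x) (t*y) = t * W x y"
    and W_diff: "\<forall>(x,y)\<in>N. ((\<lambda>(a,b). W a b) has_derivative
                   (\<lambda>(h,k). Wx x y * h + Wy x y * k)) (at (x, y))"
    and W_pde: "\<forall>(x,y)\<in>N. W x y * rat2 Pr Qr x y
                   + Wx x y * (y * rat2 Pw Qw x y - x * rat2 Pr Qr x y) = 0"
begin

definition varpi1 :: "real \<Rightarrow> real" where "varpi1 t = rat2 Pw Qw t 1"
definition varrho1 :: "real \<Rightarrow> real" where "varrho1 t = rat2 Pr Qr t 1"
definition D :: "real \<Rightarrow> real" where "D t = t * varrho1 t - varpi1 t"
definition t0 :: real where "t0 = x0 / y0"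

definition solves_on_rays :: "(real \<Rightarrow> real \<Rightarrow> real) \<Rightarrow> (real \<Rightarrow> real \<Rightarrow> real) \<Rightarrow> (real \<Rightarrow> real \<Rightarrow> real) \<Rightarrow> bool"
  where "solves_on_rays \<phi> \<phi>x \<phi>y \<longleftrightarrow> (\<forall>(x,y)\<in>U. \<forall>s. s \<noteq> 0 \<and> \<bar>s\<bar> < \<delta> \<longrightarrow>
     ((\<lambda>(a,b). \<phi> a b) has_derivative (\<lambda>(h,k). \<phi>x (s*x) (s*y) * h + \<phi>y (s*x) (s*y) * k)) (at (s*x, s*y)) \<and>
     \<phi>x (s*x) (s*y) * (rat2 Pw Qw (s*x) (s*y) - s*x)
       + \<phi>y (s*x) (s*y) * (rat2 Pr Qr (s*x) (s*y) - s*y) = - \<phi> (s*x) (s*y))"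

lemma solves_on_rays_uv: "solves_on_rays u ux uy" "solves_on_rays v vx vy"
  unfolding solves_on_rays_def using u_diff u_pde v_diff v_pde by auto

lemma t0_y0: "t0 * y0 = x0"
  using y0_nz by (simp add: t0_def)

lemma t0_J: "t0 \<in> J"
  using J_pt by (simp add: t0_def)

lemma ode_J:
  assumes "t \<in> J"
  shows "poly2 Qw t 1 \<noteq> 0" "poly2 Qr t 1 \<noteq> 0" "(f has_real_derivative f' t) (at t)"
    and "f t * varrho1 t + f' t * D t = 1"
  using f_ode assms by (auto simp: varpi1_def varrho1_def D_def)

lemma rat2_on_line:
  assumes "t \<in> J" "poly2 Qw (s * t) s \<noteq> 0" "poly2 Qr (s * t) s \<noteq> 0"
  shows "rat2 Pw Qw (s * t) s = s\<^sup>2 * varpi1 t" "rat2 Pr Qr (s * t) s = s\<^sup>2 * varrho1 t"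
  using homogeneous_rat2_scale[OF hom_w ode_J(1)[OF assms(1)], of s]
    homogeneous_rat2_scale[OF hom_r ode_J(2)[OF assms(1)], of s] assms(2,3)
  by (simp_all add: varpi1_def varrho1_def)

lemma solves_on_rays_line:
  assumes "solves_on_rays \<phi> \<phi>x \<phi>y" "(t * r, r) \<in> U" "t \<in> J" "s \<noteq> 0" "\<bar>s\<bar> < \<delta>"
  defines "p \<equiv> s * (t * r)" and "q \<equiv> s * r"
  shows "((\<lambda>(a,b). \<phi> a b) has_derivative (\<lambda>(h,k). \<phi>x p q * h + \<phi>y p q * k)) (at (p, q))"
    and "\<phi>x p q * (q\<^sup>2 * varpi1 t - p) + \<phi>y p q * (q\<^sup>2 * varrho1 t - q) = - \<phi> p q"
proof -
  have pq: "p = q * t" by (simp add: p_def q_def)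
  have "poly2 Qw p q \<noteq> 0 \<and> poly2 Qr p q \<noteq> 0"
    using bspec[OF uv_dom assms(2)] assms(4,5) by (simp add: p_def q_def)
  then have "poly2 Qw (q * t) q \<noteq> 0" "poly2 Qr (q * t) q \<noteq> 0"
    by (simp_all add: pq)
  note hom = rat2_on_line[OF assms(3) this, folded pq]
  have "((\<lambda>(a,b). \<phi> a b) has_derivative (\<lambda>(h,k). \<phi>x p q * h + \<phi>y p q * k)) (at (p, q)) \<and>
      \<phi>x p q * (rat2 Pw Qw p q - p) + \<phi>y p q * (rat2 Pr Qr p q - q) = - \<phi> p q"
    using bspec[OF assms(1)[unfolded solves_on_rays_def] assms(2)] assms(4,5)
    by (simp add: p_def q_def)
  then show "((\<lambda>(a,b). \<phi> a b) has_derivative (\<lambda>(h,k). \<phi>x p q * h + \<phi>y p q * k)) (at (p, q))"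
    and "\<phi>x p q * (q\<^sup>2 * varpi1 t - p) + \<phi>y p q * (q\<^sup>2 * varrho1 t - q) = - \<phi> p q"
    unfolding hom by simp_all
qed

lemma W_first_integral_on_line:
  assumes "(t * r, r) \<in> N" "t \<in> J" "r \<noteq> 0"
  shows "Wx (t * r) r * varpi1 t + Wy (t * r) r * varrho1 t = 0"
proof -
  have "poly2 Qw (r * t) r \<noteq> 0" "poly2 Qr (r * t) r \<noteq> 0"
    using N_dom assms(1) by (auto simp: mult.commute)
  note hom = rat2_on_line[OF assms(2) this, unfolded mult.commute[of r t]]
  have euler: "t * r * Wx (t * r) r + r * Wy (t * r) r = W (t * r) r"
    using assms(1) W_hom W_diff N_open
    by (intro euler_relation_degree_one[of N]) auto
  have "W (t * r) r * (r\<^sup>2 * varrho1 t)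
      + Wx (t * r) r * (r * (r\<^sup>2 * varpi1 t) - t * r * (r\<^sup>2 * varrho1 t)) = 0"
    using W_pde assms(1) unfolding hom[symmetric] by auto
  then have "r ^ 3 * (Wx (t * r) r * varpi1 t + Wy (t * r) r * varrho1 t) = 0"
    unfolding euler[symmetric] by (simp add: algebra_simps power2_eq_square power3_eq_cube)
  with assms(3) show ?thesis by simp
qed

lemma DERIV_ray_invariant:
  assumes D0: "D t0 = 0" and \<phi>: "solves_on_rays \<phi> \<phi>x \<phi>y" and r: "r \<noteq> 0" "\<bar>r\<bar> < \<delta>"
  defines "l \<equiv> y0 * varrho1 t0"
  shows "((\<lambda>r. \<phi> (r * x0) (r * y0) * ((1 - l * r) / r)) has_real_derivative 0) (at r)"
proof -
  note sol = solves_on_rays_line[OF \<phi> _ t0_J r, of y0, unfolded t0_y0]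
  have "varpi1 t0 = t0 * varrho1 t0" using D0 by (simp add: D_def)
  then have "(r * y0)\<^sup>2 * varpi1 t0 - r * (t0 * y0) = r * (l * r - 1) * (t0 * y0)"
    unfolding l_def by (simp add: power2_eq_square algebra_simps)
  then have "(r * y0)\<^sup>2 * varpi1 t0 - r * x0 = r * (l * r - 1) * x0"
    by (simp only: t0_y0)
  moreover have "(r * y0)\<^sup>2 * varrho1 t0 - r * y0 = r * (l * r - 1) * y0"
    unfolding l_def by (simp add: power2_eq_square algebra_simps)
  ultimately
  have pde: "\<phi>x (r * x0) (r * y0) * (r * (l * r - 1) * x0) + \<phi>y (r * x0) (r * y0) * (r * (l * r - 1) * y0)
      = -1 * \<phi> (r * x0) (r * y0)"
    using sol(2)[OF x0y0_U] by simp
  show ?thesis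
  proof (rule DERIV_first_integral_along_field[where p="\<lambda>r. r * x0" and q="\<lambda>r. r * y0"
        and g="\<lambda>r. (1 - l * r) / r" and \<nu>="-1 / r\<^sup>2", OF sol(1)[OF x0y0_U] _ _ _ _ _ pde])
    show "((\<lambda>r. (1 - l * r) / r) has_real_derivative - (-1) * (-1 / r\<^sup>2)) (at r)"
      using r by (auto intro!: derivative_eq_intros simp: power2_eq_square field_simps)
    show "(1 - l * r) / r * x0 = -1 / r\<^sup>2 * (r * (l * r - 1) * x0)"
      and "(1 - l * r) / r * y0 = -1 / r\<^sup>2 * (r * (l * r - 1) * y0)"
      using r by (simp_all add: power2_eq_square field_simps)
  qed (auto intro!: derivative_eq_intros)
qed

lemma ray_closed_form:
  assumes D0: "D t0 = 0" and \<phi>: "solves_on_rays \<phi> \<phi>x \<phi>y"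
    and lim: "((\<lambda>z. \<phi> (x0 * z) (y0 * z) / z) \<longlongrightarrow> c) (at 0)"
    and z: "z \<noteq> 0" "\<bar>z\<bar> < \<delta>"
  shows "\<phi> (z * x0) (z * y0) * ((1 - y0 * varrho1 t0 * z) / z) = c"
proof -
  define K where "K = (\<lambda>r. \<phi> (r * x0) (r * y0) * ((1 - y0 * varrho1 t0 * r) / r))"
  have "K z = c"
  proof (rule continuous_value_eq_limit_of_shift[where G="\<lambda>_. K z", OF _ continuous_const z(1)])
    have "((\<lambda>r. \<phi> (x0 * r) (y0 * r) / r * (1 - y0 * varrho1 t0 * r)) \<longlongrightarrow> c * (1 - y0 * varrho1 t0 * 0)) (at 0)"
      by (intro tendsto_intros lim)
    then show "(K \<longlongrightarrow> c) (at 0)"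
      by (simp add: K_def mult_ac)
    show "K (z * \<theta>) = K z" if "0 < \<theta>" "\<theta> < 1" for \<theta>
    proof (rule DERIV_zero_closed_segment_eq[where k=K])
      fix r assume "r \<in> closed_segment (z * \<theta>) z"
      then have "r \<noteq> 0" "\<bar>r\<bar> \<le> \<bar>z\<bar> * 1"
        using closed_segment_scaled_bounds[of r z \<theta> 1] that z by auto
      then show "(K has_real_derivative 0) (at r)"
        unfolding K_def using z by (intro DERIV_ray_invariant[OF D0 \<phi>]) auto
    qed
  qed
  then show ?thesis by (simp add: K_def)
qed

lemma degenerate_W_vanishes:
  assumes D0: "D t0 = 0"
  shows "W x0 y0 = 0"
proof -
  have y0t0: "y0 * t0 = x0" using t0_y0 by (simp add: mult.commute)
  have "poly2 Qw (y0 * t0) y0 \<noteq> 0" "poly2 Qr (y0 * t0) y0 \<noteq> 0"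
    using N_dom x0y0_N by (auto simp: y0t0)
  note hom = rat2_on_line[OF t0_J this, unfolded y0t0]
  have "y0 * (y0\<^sup>2 * varpi1 t0) - t0 * y0 * (y0\<^sup>2 * varrho1 t0) = - (y0 ^ 3 * D t0)"
    unfolding D_def by (simp add: power2_eq_square power3_eq_cube algebra_simps)
  then have "y0 * (y0\<^sup>2 * varpi1 t0) - x0 * (y0\<^sup>2 * varrho1 t0) = 0"
    using D0 by (simp only: t0_y0)
  with W_pde x0y0_N have "W x0 y0 * (y0\<^sup>2 * varrho1 t0) = 0"
    unfolding hom[symmetric] by auto
  moreover have "varrho1 t0 \<noteq> 0"
    using ode_J(4)[OF t0_J] D0 by auto
  ultimately show ?thesis
    using y0_nz by simp
qed

lemma degenerate_case:
  assumes D0: "D t0 = 0"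
  shows "\<forall>\<^sub>F z in at 0.
           (let uz = u (x0*z) (y0*z) / z; vz = v (x0*z) (y0*z) / z in
              W uz vz = W x0 y0 \<and> 1 / vz * f (uz / vz) = 1 / y0 * f (x0 / y0) - z)"
proof -
  define l where "l = y0 * varrho1 t0"
  have lf: "l * f t0 = y0"
    using ode_J(4)[OF t0_J] D0 by (simp add: l_def mult_ac)
  have "((\<lambda>z. 1 - l * z) \<longlongrightarrow> 1) (at (0::real))"
    by (auto intro!: tendsto_eq_intros)
  then have pos: "\<forall>\<^sub>F z in at 0. 0 < 1 - l * z"
    by (rule order_tendstoD) simp
  have "((\<lambda>z. (x0 / (1 - l * z), y0 / (1 - l * z))) \<longlongrightarrow> (x0, y0)) (at (0::real))"
    by (auto intro!: tendsto_eq_intros)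
  then have inN: "\<forall>\<^sub>F z in at 0. (x0 / (1 - l * z), y0 / (1 - l * z)) \<in> N"
    using N_open x0y0_N by (rule topological_tendstoD)
  show ?thesis
    using eventually_at_zero_abs_less[OF delta_pos] pos inN
  proof eventually_elim
    case (elim z)
    then have z: "z \<noteq> 0" "\<bar>z\<bar> < \<delta>" and c: "0 < 1 - l * z" by auto
    have u: "u (x0 * z) (y0 * z) / z = x0 / (1 - l * z)"
      using ray_closed_form[OF D0 solves_on_rays_uv(1) bspec[OF u_bd x0y0_U, simplified] z] c
      by (simp add: l_def field_simps mult.commute)
    have v: "v (x0 * z) (y0 * z) / z = y0 / (1 - l * z)"
      using ray_closed_form[OF D0 solves_on_rays_uv(2) bspec[OF v_bd x0y0_U, simplified] z] c
      by (simp add: l_def field_simps mult.commute)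
    have "W (1 / (1 - l * z) * x0) (1 / (1 - l * z) * y0) = 1 / (1 - l * z) * W x0 y0"
      using bspec[OF W_hom x0y0_N, simplified, rule_format, of "1 / (1 - l * z)"] elim c by simp
    then have "W (x0 / (1 - l * z)) (y0 / (1 - l * z)) = W x0 y0"
      using degenerate_W_vanishes[OF D0] by simp
    moreover have "f (x0 / y0) * (1 - l * z) / y0 = 1 / y0 * f (x0 / y0) - z"
      using lf y0_nz by (simp add: t0_def field_simps)
    ultimately show ?case
      using c y0_nz by (simp add: u v Let_def)
  qed
qed

lemma isCont_D: "t \<in> J \<Longrightarrow> isCont D t"
  unfolding D_def varpi1_def varrho1_def
  by (intro continuous_intros isCont_rat2_line ode_J)

lemma isCont_slope_coefficient:
  assumes "t \<in> J" "D t \<noteq> 0"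
  shows "isCont (\<lambda>t. - varrho1 t / D t) t"
  using assms unfolding varrho1_def by (intro continuous_intros isCont_rat2_line isCont_D ode_J)

lemma nondegenerate_neighbourhood:
  assumes "D t0 \<noteq> 0"
  obtains e where "e > 0" "\<And>t. \<bar>t - t0\<bar> \<le> e \<Longrightarrow> t \<in> J \<and> 0 < D t * D t0"
proof -
  have "((\<lambda>t. D t * D t0) \<longlongrightarrow> D t0 * D t0) (nhds t0)"
    using isCont_D[OF t0_J] unfolding isCont_def by (intro tendsto_intros) (simp add: tendsto_nhds_iff)
  moreover have "0 < D t0 * D t0"
    using assms not_real_square_gt_zero by blast
  ultimately have "\<forall>\<^sub>F t in nhds t0. 0 < D t * D t0"
    by (rule order_tendstoD)
  with eventually_nhds_in_open[OF J_open t0_J]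
  have "\<forall>\<^sub>F t in nhds t0. t \<in> J \<and> 0 < D t * D t0"
    by (rule eventually_conj)
  then obtain d where "d > 0" "\<And>t. dist t t0 < d \<Longrightarrow> t \<in> J \<and> 0 < D t * D t0"
    unfolding eventually_nhds_metric by blast
  then show thesis
    by (intro that[of "d / 2"]) (auto simp: dist_real_def)
qed

end

locale characteristic_orbit = homogeneous_characteristics +
  fixes e :: real and y :: "real \<Rightarrow> real"
  assumes e_pos: "e > 0" and y_t0: "y t0 = y0" and y_sign: "\<And>t. 0 < y t * y0"
    and orbit_J: "\<And>t. \<bar>t - t0\<bar> \<le> e \<Longrightarrow> t \<in> J"
    and orbit_D: "\<And>t. \<bar>t - t0\<bar> \<le> e \<Longrightarrow> 0 < D t * D t0"
    and orbit_y: "\<And>t. \<bar>t - t0\<bar> \<le> e \<Longrightarrow> (y has_real_derivative - y t / D t * varrho1 t) (at t)"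
    and orbit_UN: "\<And>t. \<bar>t - t0\<bar> \<le> e \<Longrightarrow> (t * y t, y t) \<in> U \<inter> N"

context homogeneous_characteristics
begin

lemma curve_near_x0y0:
  assumes "isCont y t0" "y t0 = y0"
  obtains d where "d > 0" "\<And>t. dist t t0 < d \<Longrightarrow> (t * y t, y t) \<in> U \<inter> N"
proof -
  have "isCont (\<lambda>t. (t * y t, y t)) t0"
    using assms(1) by (intro continuous_intros)
  then have "((\<lambda>t. (t * y t, y t)) \<longlongrightarrow> (x0, y0)) (nhds t0)"
    unfolding tendsto_nhds_iff isCont_def using assms(2) t0_y0 by simp
  then have "\<forall>\<^sub>F t in nhds t0. (t * y t, y t) \<in> U \<inter> N"
    using U_open N_open x0y0_U x0y0_N by (intro topological_tendstoD) auto
  then show thesis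
    using that unfolding eventually_nhds_metric by blast
qed

lemma orbit_exists:
  assumes "D t0 \<noteq> 0"
  obtains e y where "characteristic_orbit Pw Qw Pr Qr u v ux uy vx vy W Wx Wy f f' x0 y0 \<delta> U N J e y"
proof -
  obtain e1 where e1: "e1 > 0" "\<And>t. \<bar>t - t0\<bar> \<le> e1 \<Longrightarrow> t \<in> J \<and> 0 < D t * D t0"
    using nondegenerate_neighbourhood[OF assms] by blast
  have "continuous_on {t0 - e1..t0 + e1} (\<lambda>t. - varrho1 t / D t)"
  proof (intro continuous_at_imp_continuous_on ballI isCont_slope_coefficient)
    fix t assume "t \<in> {t0 - e1..t0 + e1}"
    then show "t \<in> J" "D t \<noteq> 0" using e1(2)[of t] by (auto simp: abs_le_iff)
  qed
  then obtain y where y: "y t0 = y0" "\<And>t. 0 < y t * y0"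
    "\<And>t. \<bar>t - t0\<bar> < e1 \<Longrightarrow> (y has_real_derivative y t * (- varrho1 t / D t)) (at t)"
    by (rule linear_ode_local_solution[OF e1(1) _ y0_nz]) blast
  have "isCont y t0"
    using y(3)[of t0] e1(1) by (auto intro: DERIV_isCont)
  then obtain d where d: "d > 0" "\<And>t. dist t t0 < d \<Longrightarrow> (t * y t, y t) \<in> U \<inter> N"
    using curve_near_x0y0[of y] y(1) by blast
  define e where "e = min (e1 / 2) (d / 2)"
  have e: "e > 0" "\<And>t. \<bar>t - t0\<bar> \<le> e \<Longrightarrow> \<bar>t - t0\<bar> < e1 \<and> dist t t0 < d"
    using e1(1) d(1) by (auto simp: e_def dist_real_def)
  have "characteristic_orbit Pw Qw Pr Qr u v ux uy vx vy W Wx Wy f f' x0 y0 \<delta> U N J e y"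
  proof (intro characteristic_orbit.intro homogeneous_characteristics_axioms
      characteristic_orbit_axioms.intro)
    fix t assume "\<bar>t - t0\<bar> \<le> e"
    with e(2) have t: "\<bar>t - t0\<bar> < e1" "dist t t0 < d" by auto
    then show "t \<in> J" and "0 < D t * D t0" using e1(2) by auto
    show "(y has_real_derivative - y t / D t * varrho1 t) (at t)"
      by (rule DERIV_cong[OF y(3)[OF t(1)]]) simp
    show "(t * y t, y t) \<in> U \<inter> N" using d(2) t(2) .
  qed (use e(1) y in auto)
  then show thesis by (rule that)
qed

end

context characteristic_orbit
begin

definition R :: "real \<Rightarrow> real" where "R = (\<lambda>t. f t / y t)"

lemma y_nonzero: "y t \<noteq> 0"
  using y_sign[of t] by auto

lemma orbit_point:
  assumes "\<bar>t - t0\<bar> \<le> e"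
  shows "t \<in> J" "D t \<noteq> 0" "(t * y t, y t) \<in> U" "(t * y t, y t) \<in> N"
  using orbit_J[OF assms] orbit_D[OF assms] orbit_UN[OF assms] by auto

lemma closed_segment_orbit:
  assumes "t \<in> closed_segment ts t0" "\<bar>ts - t0\<bar> \<le> e"
  shows "\<bar>t - t0\<bar> \<le> e"
  using assms by (auto simp: closed_segment_eq_real_ivl split: if_splits)

lemma orbit_abscissa_velocity:
  assumes "\<bar>t - t0\<bar> \<le> e"
  shows "((\<lambda>t. t * y t) has_real_derivative - y t / D t * varpi1 t) (at t)"
  using orbit_point(2)[OF assms]
  by (intro DERIV_cong[OF DERIV_mult[OF DERIV_ident orbit_y[OF assms]]]) (simp add: D_def field_simps)

lemma DERIV_R:
  assumes "\<bar>t - t0\<bar> \<le> e"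
  shows "(R has_real_derivative 1 / (y t * D t)) (at t)"
proof -
  note t = orbit_point[OF assms]
  have "(R has_real_derivative (f' t * y t - f t * (- y t / D t * varrho1 t)) / (y t * y t)) (at t)"
    unfolding R_def by (rule DERIV_divide[OF ode_J(3)[OF t(1)] orbit_y[OF assms] y_nonzero])
  moreover have "(f' t * y t - f t * (- y t / D t * varrho1 t)) / (y t * y t)
      = (f t * varrho1 t + f' t * D t) / (y t * D t)"
    using t(2) y_nonzero[of t] by (simp add: field_simps)
  ultimately have "(R has_real_derivative (f t * varrho1 t + f' t * D t) / (y t * D t)) (at t)"
    by simp
  then show ?thesis
    by (simp add: ode_J(4)[OF t(1)])
qed

lemma DERIV_R_sign:
  assumes "\<bar>t - t0\<bar> \<le> e"
  shows "0 < y0 * D t0 * (1 / (y t * D t))"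
proof -
  have "0 < (y t * y0) * (D t * D t0)"
    using y_sign[of t] orbit_D[OF assms] by simp
  moreover have "y0 * D t0 * (1 / (y t * D t)) = (y t * y0) * (D t * D t0) / (y t * D t)\<^sup>2"
    using y_nonzero[of t] orbit_point(2)[OF assms] by (simp add: field_simps power2_eq_square)
  ultimately show ?thesis
    using y_nonzero[of t] orbit_point(2)[OF assms] by simp
qed

lemma W_constant_on_orbit:
  assumes "\<bar>ts - t0\<bar> \<le> e"
  shows "W (ts * y ts) (y ts) = W x0 y0"
proof -
  have "W (ts * y ts) (y ts) * 1 = W (t0 * y t0) (y t0) * 1"
  proof (rule DERIV_zero_closed_segment_eq[where k="\<lambda>t. W (t * y t) (y t) * 1"])
    fix t assume "t \<in> closed_segment ts t0"
    then have t: "\<bar>t - t0\<bar> \<le> e" using assms by (rule closed_segment_orbit)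
    note pt = orbit_point[OF t]
    show "((\<lambda>t. W (t * y t) (y t) * 1) has_real_derivative 0) (at t)"
    proof (rule DERIV_first_integral_along_field[where p="\<lambda>t. t * y t" and q=y and \<kappa>=0
          and \<nu>="- y t / D t", OF _ orbit_abscissa_velocity[OF t] orbit_y[OF t]])
      show "((\<lambda>(a, b). W a b) has_derivative
          (\<lambda>(h, k). Wx (t * y t) (y t) * h + Wy (t * y t) (y t) * k)) (at (t * y t, y t))"
        using W_diff pt(4) by auto
      show "Wx (t * y t) (y t) * varpi1 t + Wy (t * y t) (y t) * varrho1 t = 0 * W (t * y t) (y t)"
        using W_first_integral_on_line[OF pt(4,1) y_nonzero] by simp
    qed auto
  qed
  then show ?thesis by (simp add: y_t0 t0_y0)
qed

lemma DERIV_scaled_orbit_invariant: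
  assumes \<phi>: "solves_on_rays \<phi> \<phi>x \<phi>y" and t: "\<bar>t - t0\<bar> \<le> e"
    and dZ: "(Z has_real_derivative 1 / (y t * D t)) (at t)" and Z: "Z t \<noteq> 0" "\<bar>Z t\<bar> < \<delta>"
  shows "((\<lambda>t. \<phi> (Z t * (t * y t)) (Z t * y t) * (1 / Z t)) has_real_derivative 0) (at t)"
proof -
  note pt = orbit_point[OF t]
  note sol = solves_on_rays_line[OF \<phi> pt(3,1) Z]
  show ?thesis
  proof (rule DERIV_first_integral_along_field[where p="\<lambda>t. Z t * (t * y t)" and q="\<lambda>t. Z t * y t"
        and g="\<lambda>t. 1 / Z t" and \<kappa>="-1" and \<nu>="- 1 / (y t * D t) / (Z t)\<^sup>2"
        and Vp="(Z t * y t)\<^sup>2 * varpi1 t - Z t * (t * y t)" and Vq="(Z t * y t)\<^sup>2 * varrho1 t - Z t * y t",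
        OF sol(1) DERIV_mult[OF dZ orbit_abscissa_velocity[OF t]] DERIV_mult[OF dZ orbit_y[OF t]]])
    show "((\<lambda>t. 1 / Z t) has_real_derivative - (- 1) * (- 1 / (y t * D t) / (Z t)\<^sup>2)) (at t)"
      using dZ Z(1) by (auto intro!: derivative_eq_intros simp: power2_eq_square)
    show "1 / Z t * (1 / (y t * D t) * (t * y t) + - y t / D t * varpi1 t * Z t)
        = - 1 / (y t * D t) / (Z t)\<^sup>2 * ((Z t * y t)\<^sup>2 * varpi1 t - Z t * (t * y t))"
      and "1 / Z t * (1 / (y t * D t) * y t + - y t / D t * varrho1 t * Z t)
        = - 1 / (y t * D t) / (Z t)\<^sup>2 * ((Z t * y t)\<^sup>2 * varrho1 t - Z t * y t)"
      using Z(1) pt(2) y_nonzero[of t] by (simp_all add: field_simps power2_eq_square)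
  qed (use sol(2) in simp)
qed


lemma orbit_transport_step:
  assumes \<phi>: "solves_on_rays \<phi> \<phi>x \<phi>y" and z: "z \<noteq> 0" "\<bar>z\<bar> < \<delta> / 2"
    and ts: "\<bar>ts - t0\<bar> \<le> e" "R ts = R t0 - z" and \<theta>: "0 < \<theta>" "\<theta> < 1"
  shows "\<phi> (z * \<theta> * (ts * y ts)) (z * \<theta> * y ts) / (z * \<theta>)
       = \<phi> ((z + z * \<theta>) * x0) ((z + z * \<theta>) * y0) / (z + z * \<theta>)"
proof -
  txt \<open>\<open>Z\<close> is the scale along the characteristic through \<open>(z + z\<theta>) \<cdot> (x0, y0)\<close>, which reaches
    the scale \<open>z\<theta>\<close> at the slope \<open>ts\<close>.\<close>
  define Z where "Z = (\<lambda>t. z * \<theta> + (R t - R ts))"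
  have Z: "Z t \<noteq> 0" "\<bar>Z t\<bar> < \<delta>" if "t \<in> closed_segment ts t0" for t
  proof -
    have "R t \<in> closed_segment (R ts) (R t0)"
      using that ts(1) DERIV_R DERIV_R_sign closed_segment_orbit
      by (intro DERIV_sign_imp_closed_segment[OF _ that]) blast
    then have "Z t \<in> closed_segment (z * \<theta>) (z * (1 + \<theta>))"
      using ts(2) by (auto simp: Z_def closed_segment_eq_real_ivl algebra_simps split: if_splits)
    from closed_segment_scaled_bounds[OF this] \<theta> z(1)
    have "Z t \<noteq> 0" "\<bar>Z t\<bar> \<le> \<bar>z\<bar> * (1 + \<theta>)" by auto
    moreover have "\<bar>z\<bar> * (1 + \<theta>) \<le> \<bar>z\<bar> * 2"
      using \<theta> by (intro mult_left_mono) auto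
    moreover have "\<bar>z\<bar> * 2 < \<delta>"
      using z by simp
    ultimately show "Z t \<noteq> 0" "\<bar>Z t\<bar> < \<delta>" by linarith+
  qed
  have "\<phi> (Z ts * (ts * y ts)) (Z ts * y ts) * (1 / Z ts) = \<phi> (Z t0 * (t0 * y t0)) (Z t0 * y t0) * (1 / Z t0)"
  proof (rule DERIV_zero_closed_segment_eq[where k="\<lambda>t. \<phi> (Z t * (t * y t)) (Z t * y t) * (1 / Z t)"])
    fix t assume t: "t \<in> closed_segment ts t0"
    have "\<bar>t - t0\<bar> \<le> e" using t ts(1) by (rule closed_segment_orbit)
    moreover from this have "(Z has_real_derivative 1 / (y t * D t)) (at t)"
      unfolding Z_def by (auto intro!: derivative_eq_intros DERIV_R)
    ultimately show "((\<lambda>t. \<phi> (Z t * (t * y t)) (Z t * y t) * (1 / Z t)) has_real_derivative 0) (at t)"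
      using Z[OF t] by (intro DERIV_scaled_orbit_invariant[OF \<phi>])
  qed
  moreover have "Z ts = z * \<theta>" "Z t0 = z + z * \<theta>"
    using ts(2) by (auto simp: Z_def)
  ultimately show ?thesis
    by (simp add: y_t0 t0_y0)
qed

lemma orbit_transport:
  assumes \<phi>: "solves_on_rays \<phi> \<phi>x \<phi>y" and z: "z \<noteq> 0" "\<bar>z\<bar> < \<delta> / 2"
    and ts: "\<bar>ts - t0\<bar> \<le> e" "R ts = R t0 - z"
    and lim: "((\<lambda>\<epsilon>. \<phi> (ts * y ts * \<epsilon>) (y ts * \<epsilon>) / \<epsilon>) \<longlongrightarrow> c) (at 0)"
  shows "\<phi> (x0 * z) (y0 * z) / z = c"
proof -
  define G where "G = (\<lambda>w. \<phi> (w * x0) (w * y0) / w)"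
  have "isCont G z"
  proof -
    have "\<bar>z\<bar> < \<delta>" using z by simp
    note sol = solves_on_rays_line[OF \<phi> _ t0_J z(1) this, of y0, unfolded t0_y0]
    have d\<phi>: "((\<lambda>w. \<phi> (w * x0) (w * y0)) has_real_derivative
        \<phi>x (z * x0) (z * y0) * x0 + \<phi>y (z * x0) (z * y0) * y0) (at z)"
      by (rule has_real_derivative_compose_bivariate[where p="\<lambda>w. w * x0" and q="\<lambda>w. w * y0"])
        (use sol(1)[OF x0y0_U] in \<open>auto intro!: derivative_eq_intros\<close>)
    show ?thesis
      unfolding G_def using DERIV_isCont[OF d\<phi>] z(1) by (intro isCont_divide continuous_ident)
  qed
  have "G z = c"
  proof (rule continuous_value_eq_limit_of_shift[OF lim \<open>isCont G z\<close> z(1)])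
    fix \<theta> :: real assume "0 < \<theta>" "\<theta> < 1"
    from orbit_transport_step[OF \<phi> z ts this]
    show "\<phi> (ts * y ts * (z * \<theta>)) (y ts * (z * \<theta>)) / (z * \<theta>) = G (z + z * \<theta>)"
      by (simp add: G_def mult_ac)
  qed
  then show ?thesis
    by (simp add: G_def mult.commute)
qed

lemma nondegenerate_conclusion:
  "\<forall>\<^sub>F z in at 0.
     (let uz = u (x0*z) (y0*z) / z; vz = v (x0*z) (y0*z) / z in
        W uz vz = W x0 y0 \<and> 1 / vz * f (uz / vz) = 1 / y0 * f (x0 / y0) - z)"
proof -
  have "\<forall>\<^sub>F z in at 0. \<exists>ts. \<bar>ts - t0\<bar> \<le> e \<and> R ts = R t0 - z"
    by (rule eventually_attains_shifted_value[where R'="\<lambda>t. 1 / (y t * D t)" and \<sigma>="y0 * D t0", OF e_pos])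
      (use DERIV_R DERIV_R_sign in blast)
  moreover have "\<forall>\<^sub>F z in at 0. z \<noteq> 0 \<and> \<bar>z\<bar> < \<delta> / 2"
    using delta_pos by (intro eventually_at_zero_abs_less) simp
  ultimately show ?thesis
  proof eventually_elim
    case (elim z)
    then obtain ts where ts: "\<bar>ts - t0\<bar> \<le> e" "R ts = R t0 - z" and z: "z \<noteq> 0" "\<bar>z\<bar> < \<delta> / 2"
      by blast
    note q = orbit_point(3)[OF ts(1)]
    have u: "u (x0 * z) (y0 * z) / z = ts * y ts"
      using bspec[OF u_bd q] by (intro orbit_transport[OF solves_on_rays_uv(1) z ts]) simp
    have v: "v (x0 * z) (y0 * z) / z = y ts"
      using bspec[OF v_bd q] by (intro orbit_transport[OF solves_on_rays_uv(2) z ts]) simp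
    have "R t0 = 1 / y0 * f (x0 / y0)"
      by (simp add: R_def y_t0 flip: t0_def)
    then have "1 / y ts * f (ts * y ts / y ts) = 1 / y0 * f (x0 / y0) - z"
      using ts(2) y_nonzero[of ts] by (simp add: R_def)
    then show ?case
      using W_constant_on_orbit[OF ts(1)] by (simp add: u v Let_def)
  qed
qed

end

context homogeneous_characteristics
begin

lemma nondegenerate_case:
  assumes "D t0 \<noteq> 0"
  shows "\<forall>\<^sub>F z in at 0.
           (let uz = u (x0*z) (y0*z) / z; vz = v (x0*z) (y0*z) / z in
              W uz vz = W x0 y0 \<and> 1 / vz * f (uz / vz) = 1 / y0 * f (x0 / y0) - z)"
proof -
  obtain e y where "characteristic_orbit Pw Qw Pr Qr u v ux uy vx vy W Wx Wy f f' x0 y0 \<delta> U N J e y"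
    using orbit_exists[OF assms] by blast
  then interpret characteristic_orbit Pw Qw Pr Qr u v ux uy vx vy W Wx Wy f f' x0 y0 \<delta> U N J e y .
  show ?thesis by (rule nondegenerate_conclusion)
qed

end

theorem theorem2:
  fixes Pw Qw Pr Qr :: "real poly poly"
    and u v ux uy vx vy W Wx Wy :: "real \<Rightarrow> real \<Rightarrow> real"
    and f f' :: "real \<Rightarrow> real"
    and x0 y0 \<delta> :: real
    and U N :: "(real \<times> real) set" and J :: "real set"
  assumes hom_w: "homogeneous_rat2 2 Pw Qw"
    and hom_r: "homogeneous_rat2 2 Pr Qr"
    and nondeg: "\<exists>x y. x * poly2 Pr x y * poly2 Qw x y - y * poly2 Pw x y * poly2 Qr x y \<noteq> 0"
    \<comment> \<open>the pair (u,v): defined near the origin along rays through points of U\<close>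
    and U_open: "open U" and x0y0_U: "(x0, y0) \<in> U" and delta_pos: "\<delta> > 0"
    and uv_dom: "\<forall>(x,y)\<in>U. \<forall>s. s \<noteq> 0 \<and> \<bar>s\<bar> < \<delta> \<longrightarrow>
                   poly2 Qw (s*x) (s*y) \<noteq> 0 \<and> poly2 Qr (s*x) (s*y) \<noteq> 0"
    and u_diff: "\<forall>(x,y)\<in>U. \<forall>s. s \<noteq> 0 \<and> \<bar>s\<bar> < \<delta> \<longrightarrow>
                   ((\<lambda>(a,b). u a b) has_derivative
                      (\<lambda>(h,k). ux (s*x) (s*y) * h + uy (s*x) (s*y) * k)) (at (s*x, s*y))"
    and v_diff: "\<forall>(x,y)\<in>U. \<forall>s. s \<noteq> 0 \<and> \<bar>s\<bar> < \<delta> \<longrightarrow>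
                   ((\<lambda>(a,b). v a b) has_derivative
                      (\<lambda>(h,k). vx (s*x) (s*y) * h + vy (s*x) (s*y) * k)) (at (s*x, s*y))"
    and u_pde: "\<forall>(x,y)\<in>U. \<forall>s. s \<noteq> 0 \<and> \<bar>s\<bar> < \<delta> \<longrightarrow>
                   ux (s*x) (s*y) * (rat2 Pw Qw (s*x) (s*y) - s*x)
                 + uy (s*x) (s*y) * (rat2 Pr Qr (s*x) (s*y) - s*y) = - u (s*x) (s*y)"
    and v_pde: "\<forall>(x,y)\<in>U. \<forall>s. s \<noteq> 0 \<and> \<bar>s\<bar> < \<delta> \<longrightarrow>
                   vx (s*x) (s*y) * (rat2 Pw Qw (s*x) (s*y) - s*x)
                 + vy (s*x) (s*y) * (rat2 Pr Qr (s*x) (s*y) - s*y) = - v (s*x) (s*y)"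
    and u_bd: "\<forall>(x,y)\<in>U. ((\<lambda>z. u (x*z) (y*z) / z) \<longlongrightarrow> x) (at 0)"
    and v_bd: "\<forall>(x,y)\<in>U. ((\<lambda>z. v (x*z) (y*z) / z) \<longlongrightarrow> y) (at 0)"
    \<comment> \<open>f solves the ODE on an open set J containing x0/y0\<close>
    and y0_nz: "y0 \<noteq> 0"
    and J_open: "open J" and J_pt: "x0 / y0 \<in> J"
    and f_ode: "\<forall>t\<in>J. poly2 Qw t 1 \<noteq> 0 \<and> poly2 Qr t 1 \<noteq> 0 \<and>
                   (f has_real_derivative f' t) (at t) \<and>
                   f t * rat2 Pr Qr t 1 + f' t * (t * rat2 Pr Qr t 1 - rat2 Pw Qw t 1) = 1"
    \<comment> \<open>W is a 1-homogeneous solution of its PDE on an open set N containing (x0,y0)\<close>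
    and N_open: "open N" and x0y0_N: "(x0, y0) \<in> N"
    and N_dom: "\<forall>(x,y)\<in>N. poly2 Qw x y \<noteq> 0 \<and> poly2 Qr x y \<noteq> 0"
    and W_hom: "\<forall>(x,y)\<in>N. \<forall>t>0. (t*x, t*y) \<in> N \<longrightarrow> W (t*x) (t*y) = t * W x y"
    and W_diff: "\<forall>(x,y)\<in>N. ((\<lambda>(a,b). W a b) has_derivative
                   (\<lambda>(h,k). Wx x y * h + Wy x y * k)) (at (x, y))"
    and W_pde: "\<forall>(x,y)\<in>N. W x y * rat2 Pr Qr x y
                   + Wx x y * (y * rat2 Pw Qw x y - x * rat2 Pr Qr x y) = 0"
  shows "\<forall>\<^sub>F z in at 0.
           (let uz = u (x0*z) (y0*z) / z; vz = v (x0*z) (y0*z) / z in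
              W uz vz = W x0 y0 \<and> 1 / vz * f (uz / vz) = 1 / y0 * f (x0 / y0) - z)"
proof -
  interpret homogeneous_characteristics Pw Qw Pr Qr u v ux uy vx vy W Wx Wy f f' x0 y0 \<delta> U N J
    by (rule homogeneous_characteristics.intro) (fact assms)+
  show ?thesis
    using degenerate_case nondegenerate_case by blast
qed

end
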